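(* In the setting of the context, with $V(\mathbf{x})=\sum_{\mathbf{n}=\mathbf{x}}^{\boldsymbol{\ell}}\mathscr{C}_{\mathbf{n},\mathbf{x}}V^{\mathbf{n}}$ where $\mathscr{C}_{\mathbf{n},\mathbf{x}}=\frac{(-1)^{|\mathbf{n}|-|\mathbf{x}|}}{(2|\mathbf{x}|+\omega+1)_{|\mathbf{n}|-|\mathbf{x}|}}\prod_{p=1}^N\binom{n_p}{x_p}(|\mathbf{n}|_1^{p-1}+|\mathbf{x}|_1^{p}+|\boldsymbol{\ell}|_p^N+a_p+\omega+1)_{n_p-x_p}$, the inverse change of basis is: for every $\mathbf{n}$ with $0\le n_p\le\ell_p$, \[ V^{\mathbf{n}}=\sum_{\mathbf{x}=\mathbf{n}}^{\boldsymbol{\ell}}\overline{\mathscr{C}}_{\mathbf{x},\mathbf{n}}V(\mathbf{x}),\qquad \overline{\mathscr{C}}_{\mathbf{x},\mathbf{n}}=\frac{1}{(|\mathbf{n}|+|\mathbf{x}|+\omega)_{|\mathbf{x}|-|\mathbf{n}|}}\prod_{p=1}^N\binom{x_p}{n_p}\big(|\mathbf{n}|_1^{p}+|\mathbf{x}|_1^{p-1}+|\boldsymbol{\ell}|_p^N+a_p+\omega+1\big)_{x_p-n_p}. \]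
   Context: Notation: for $N$-tuples of integers, $|\mathbf{n}|_j^k=\sum_{p=j}^k n_p$ (equal to $0$ if $j>k$), $|\mathbf{n}|=|\mathbf{n}|_1^N$; $(x)_k=x(x+1)\cdots(x+k-1)$, $(x)_0=1$. A sum $\sum_{\mathbf{n}=\mathbf{a}}^{\mathbf{b}}$ means the sum over all $\mathbf{n}$ with $a_p\le n_p\le b_p$ for every $p$. Setting: $N\ge1$, $\boldsymbol{\ell}=(\ell_1,\dots,\ell_N)$ nonnegative integers, $\mathcal{V}=\mathbb{C}^{\ell_1+1}\otimes\cdots\otimes\mathbb{C}^{\ell_N+1}$ with basis $V^{\mathbf{n}}$, $0\le n_p\le\ell_p$. Scalars $\theta_0,\theta_0^\star,h,h^\star,\omega,\omega^\star,a_1,\dots,a_N\in\mathbb{C}$ satisfy the standing constraints: $h,h^\star\neq0$; $\omega,\omega^\star\notin\{-2|\boldsymbol{\ell}|+1,\dots,-1\}$; for each $i$, none of $a_i,\ a_i+\omega-\omega^\star,\ a_i-|\boldsymbol{\ell}|-\omega^\star,\ a_i+|\boldsymbol{\ell}|+\omega$ lies in $\{-\ell_i,\dots,-1\}$; and with $S^\pm(\ell,a)=\{\pm(a+k+\tfrac12(\omega-\omega^\star)):k=1,\dots,\ell\}$, for all $i,j$ and signs, $S^{\epsilon_i}(\ell_i,a_i)$ and $S^{\epsilon_j}(\ell_j,a_j)$ are in general position (one contains the other or their union is not a string). *)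

theory Defs
  imports Complex_Main "HOL-Library.Function_Algebras"
begin

text \<open>N-tuples are lists of length N; entry p (1-based, 1 <= p <= N) of n is n ! (p - 1).\<close>

definition psum :: "nat list \<Rightarrow> nat \<Rightarrow> nat \<Rightarrow> nat" where
  "psum n j k = (\<Sum>p\<in>{j..k}. n ! (p - 1))"

definition tsum :: "nat list \<Rightarrow> nat" where
  "tsum n = psum n 1 (length n)"

definition tbox :: "nat list \<Rightarrow> nat list \<Rightarrow> nat list set" where
  "tbox a b = {m. length m = length a \<and> (\<forall>p<length a. a ! p \<le> m ! p \<and> m ! p \<le> b ! p)}"

text \<open>Vectors of V are coordinate functions on tuples; V^n is the basis vector at n.\<close>
definition basisV :: "nat list \<Rightarrow> (nat list \<Rightarrow> complex)" where
  "basisV n = (\<lambda>m. if m = n then 1 else 0)"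

definition coefC :: "nat list \<Rightarrow> complex list \<Rightarrow> complex \<Rightarrow> nat list \<Rightarrow> nat list \<Rightarrow> complex" where
  "coefC ell a \<omega> n x =
     (-1) ^ (tsum n - tsum x) / pochhammer (2 * of_nat (tsum x) + \<omega> + 1) (tsum n - tsum x)
     * (\<Prod>p\<in>{1..length ell}. of_nat ((n ! (p - 1)) choose (x ! (p - 1)))
        * pochhammer (of_nat (psum n 1 (p - 1) + psum x 1 p + psum ell p (length ell)) + a ! (p - 1) + \<omega> + 1)
                     (n ! (p - 1) - x ! (p - 1)))"

definition coefCbar :: "nat list \<Rightarrow> complex list \<Rightarrow> complex \<Rightarrow> nat list \<Rightarrow> nat list \<Rightarrow> complex" where
  "coefCbar ell a \<omega> x n =
     1 / pochhammer (of_nat (tsum n + tsum x) + \<omega>) (tsum x - tsum n)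
     * (\<Prod>p\<in>{1..length ell}. of_nat ((x ! (p - 1)) choose (n ! (p - 1)))
        * pochhammer (of_nat (psum n 1 p + psum x 1 (p - 1) + psum ell p (length ell)) + a ! (p - 1) + \<omega> + 1)
                     (x ! (p - 1) - n ! (p - 1)))"

definition Vvec :: "nat list \<Rightarrow> complex list \<Rightarrow> complex \<Rightarrow> nat list \<Rightarrow> (nat list \<Rightarrow> complex)" where
  "Vvec ell a \<omega> x = (\<Sum>n\<in>tbox x ell. (\<lambda>m. coefC ell a \<omega> n x * basisV n m))"

definition is_string :: "complex set \<Rightarrow> bool" where
  "is_string S \<longleftrightarrow> (\<exists>c m. S = {c + of_nat k | k. k \<le> m})"

definition Spm :: "bool \<Rightarrow> nat \<Rightarrow> complex \<Rightarrow> complex \<Rightarrow> complex \<Rightarrow> complex set" where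
  "Spm pos l a \<omega> \<omega>s = {(if pos then 1 else -1) * (a + of_nat k + (\<omega> - \<omega>s) / 2) | k. 1 \<le> k \<and> k \<le> l}"

definition general_position :: "complex set \<Rightarrow> complex set \<Rightarrow> bool" where
  "general_position S T \<longleftrightarrow> S \<subseteq> T \<or> T \<subseteq> S \<or> \<not> is_string (S \<union> T)"

end

theory Submission
  imports Defs
begin

(* Write K(m,x) for the product of binomials and Pochhammer symbols shared by both coefficients
   (binom_poch_prod).  Then Cbar(x,n) C(m,x) is K(x,n) K(m,x) times a factor depending only on |x|.
   Summing K(x,n) K(m,x) over the x between n and m with |x| = |n| + t gives K(m,n) binom(|m|-|n|, t):
   by induction on the number of coordinates, where adding a coordinate is a Pochhammer analogue of
   the Vandermonde convolution, proved by telescoping.  What remains is the one-variable sum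
   sum_t (-1)^(d-t) binom(d,t) / ((c+t)_t (c+2t+1)_(d-t)) with c = 2|n| + omega, d = |m| - |n|,
   which telescopes to 0 for d >= 1 after a partial-fraction splitting of its terms. *)

lemma pochhammer_minus_pochhammer_plus_1:
  fixes x :: "'a :: comm_ring_1"
  shows "pochhammer x n - pochhammer (x + 1) n = - of_nat n * pochhammer (x + 1) (n - 1)"
proof (cases n)
  case (Suc j)
  have "pochhammer x (Suc j) = x * pochhammer (x + 1) j" by (rule pochhammer_rec)
  moreover have "pochhammer (x + 1) (Suc j) = (x + 1 + of_nat j) * pochhammer (x + 1) j"
    by (rule pochhammer_rec')
  ultimately show ?thesis using Suc by (simp add: algebra_simps)
qed simp

lemma binomial_times_diff: "(n choose k) * (n - k) = (n choose Suc k) * Suc k"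
  using binomial_absorb_comp[of n k] binomial_absorption[of k n] by (simp add: mult.commute)

lemma pochhammer_product_difference:
  fixes x y u v :: "'a :: comm_ring_1"
  shows "(u + v) * pochhammer x j * pochhammer (y + 1) r - v * pochhammer (x + 1) j * pochhammer (y + 1) r
      - u * pochhammer x j * pochhammer y r
    = of_nat r * u * pochhammer x j * pochhammer (y + 1) (r - 1)
      - of_nat j * v * pochhammer (x + 1) (j - 1) * pochhammer (y + 1) r"
proof -
  have "(u + v) * pochhammer x j * pochhammer (y + 1) r - v * pochhammer (x + 1) j * pochhammer (y + 1) r
      - u * pochhammer x j * pochhammer y r
    = v * pochhammer (y + 1) r * (pochhammer x j - pochhammer (x + 1) j)
      - u * pochhammer x j * (pochhammer y r - pochhammer (y + 1) r)"
    by (simp add: algebra_simps)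
  then show ?thesis
    unfolding pochhammer_minus_pochhammer_plus_1 by (simp add: algebra_simps)
qed

lemma pochhammer_convolution_telescoping:
  fixes z :: "'a :: comm_ring_1" and m n t :: nat
  defines "T \<equiv> \<lambda>m t z j. (if j \<le> t then of_nat (m choose (t - j)) else 0) * of_nat (n choose j)
      * pochhammer (z + of_nat (t - j)) j * pochhammer (z + of_nat m + of_nat t) (n - j)"
  shows "\<exists>g. g 0 = 0 \<and> g (Suc n) = 0
    \<and> (\<forall>j. T (Suc m) (Suc t) z j - T m (Suc t) (z + 1) j - T m t (z + 1) j = g (Suc j) - g j)"
proof (intro exI conjI allI)
  define g where "g j = (if j \<le> Suc t then of_nat (n choose j) * of_nat j * of_nat (m choose (Suc t - j))
      * pochhammer (z + of_nat (Suc t - j) + 1) (j - 1) * pochhammer (z + of_nat m + of_nat (Suc t) + 1) (n - j)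
      else 0)" for j
  show "g 0 = 0" "g (Suc n) = 0" unfolding g_def by (simp_all add: binomial_eq_0)
  fix j
  show "T (Suc m) (Suc t) z j - T m (Suc t) (z + 1) j - T m t (z + 1) j = g (Suc j) - g j"
  proof (cases "j \<le> Suc t")
    case False
    then show ?thesis unfolding T_def g_def by auto
  next
    case True
    define u where "u = (if j \<le> t then of_nat (m choose (t - j)) else (0 :: 'a))"
    define v where "v = (of_nat (m choose (Suc t - j)) :: 'a)"
    define x where "x = z + of_nat (Suc t - j)"
    define y where "y = z + of_nat m + of_nat (Suc t)"
    have T: "T (Suc m) (Suc t) z j = of_nat (n choose j) * ((u + v) * pochhammer x j * pochhammer (y + 1) (n - j))"
      "T m (Suc t) (z + 1) j = of_nat (n choose j) * (v * pochhammer (x + 1) j * pochhammer (y + 1) (n - j))"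
      using True unfolding T_def u_def v_def x_def y_def
      by (auto simp: Suc_diff_le algebra_simps)
    have T': "T m t (z + 1) j = of_nat (n choose j) * (u * pochhammer x j * pochhammer y (n - j))"
      unfolding T_def u_def x_def y_def by (simp add: Suc_diff_le algebra_simps)
    have gj: "g j = of_nat (n choose j) * (of_nat j * v * pochhammer (x + 1) (j - 1) * pochhammer (y + 1) (n - j))"
      using True unfolding g_def v_def x_def y_def by (simp add: algebra_simps)
    have gSj: "g (Suc j) = of_nat (n choose j) * (of_nat (n - j) * u * pochhammer x j * pochhammer (y + 1) (n - j - 1))"
    proof (cases "j \<le> t")
      case True
      have "of_nat (n choose Suc j) * of_nat (Suc j) = (of_nat (n choose j) * of_nat (n - j) :: 'a)"
        by (simp only: binomial_times_diff flip: of_nat_mult)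
      with True show ?thesis
        unfolding g_def u_def x_def y_def by (simp add: Suc_diff_le algebra_simps)
    qed (simp add: g_def u_def)
    have "g (Suc j) - g j = of_nat (n choose j)
        * (of_nat (n - j) * u * pochhammer x j * pochhammer (y + 1) (n - j - 1)
          - of_nat j * v * pochhammer (x + 1) (j - 1) * pochhammer (y + 1) (n - j))"
      unfolding gj gSj by (simp add: algebra_simps)
    also have "\<dots> = of_nat (n choose j) * ((u + v) * pochhammer x j * pochhammer (y + 1) (n - j)
        - v * pochhammer (x + 1) j * pochhammer (y + 1) (n - j) - u * pochhammer x j * pochhammer y (n - j))"
      by (simp only: pochhammer_product_difference)
    finally show ?thesis
      unfolding T T' by (simp add: algebra_simps)
  qed
qed

(* The guard j <= t encodes binom(m, t - j) = 0 for j > t, which truncated subtraction would lose. *)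
lemma pochhammer_binomial_convolution:
  fixes z :: "'a :: comm_ring_1"
  shows "(\<Sum>j\<le>n. (if j \<le> t then of_nat (m choose (t - j)) else 0) * of_nat (n choose j)
      * pochhammer (z + of_nat (t - j)) j * pochhammer (z + of_nat m + of_nat t) (n - j))
    = of_nat ((m + n) choose t) * pochhammer (z + of_nat m) n"
proof (induction m arbitrary: t z)
  case 0
  have "(\<Sum>j\<le>n. (if j \<le> t then of_nat (0 choose (t - j)) else 0) * of_nat (n choose j)
      * pochhammer (z + of_nat (t - j)) j * pochhammer (z + of_nat 0 + of_nat t) (n - j))
    = (\<Sum>j\<le>n. if j = t then of_nat (n choose j) * pochhammer z j * pochhammer (z + of_nat j) (n - j)
        else (0 :: 'a))"
    by (rule sum.cong) (auto simp: binomial_eq_0)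
  also have "\<dots> = of_nat (n choose t) * pochhammer z n"
    by (auto simp: pochhammer_product[symmetric] binomial_eq_0 mult.assoc)
  finally show ?case by simp
next
  case (Suc m)
  show ?case
  proof (cases t)
    case 0
    then show ?thesis by (simp add: sum.atMost_shift del: sum.atMost_Suc)
  next
    case (Suc t')
    define T where "T m t z j = (if j \<le> t then of_nat (m choose (t - j)) else 0) * of_nat (n choose j)
      * pochhammer (z + of_nat (t - j)) j * pochhammer (z + of_nat m + of_nat t) (n - j)"
      for m t j and z :: 'a
    obtain g :: "nat \<Rightarrow> 'a" where g: "\<And>j. T (Suc m) (Suc t') z j - T m (Suc t') (z + 1) j
        - T m t' (z + 1) j = g (Suc j) - g j" and "g 0 = 0" and "g (Suc n) = 0"
      using pochhammer_convolution_telescoping[where z = z and m = m and n = n and t = t']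
      unfolding T_def by blast
    have "sum (T (Suc m) (Suc t') z) {..n} - sum (T m (Suc t') (z + 1)) {..n}
        - sum (T m t' (z + 1)) {..n} = (\<Sum>j<Suc n. g (Suc j) - g j)"
      by (simp only: sum_subtractf[symmetric] g lessThan_Suc_atMost)
    also have "\<dots> = 0"
      by (simp only: sum_lessThan_telescope \<open>g 0 = 0\<close> \<open>g (Suc n) = 0\<close> diff_self)
    finally have "sum (T (Suc m) t z) {..n} = sum (T m (Suc t') (z + 1)) {..n} + sum (T m t' (z + 1)) {..n}"
      using Suc by (simp add: algebra_simps)
    also have "\<dots> = of_nat ((Suc m + n) choose t) * pochhammer (z + of_nat (Suc m)) n"
      using Suc.IH[of "Suc t'" "z + 1"] Suc.IH[of t' "z + 1"] Suc
      by (simp add: T_def algebra_simps)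
    finally show ?thesis by (simp add: T_def)
  qed
qed

lemma binomial_Suc_Suc_times_linear:
  fixes c :: "'a :: comm_ring_1"
  assumes "i \<le> e"
  shows "of_nat (Suc e choose Suc i) * (c + 2 * of_nat (Suc i))
    = of_nat (e choose i) * (c + of_nat (Suc i) + of_nat (Suc e)) + of_nat (e choose Suc i) * (c + of_nat (Suc i))"
proof -
  have "of_nat (e choose i) * (of_nat e - of_nat i) = (of_nat (e choose Suc i) * (of_nat i + 1) :: 'a)"
    using arg_cong[OF binomial_times_diff[of e i], of "of_nat :: nat \<Rightarrow> 'a"] assms
    by (simp add: algebra_simps)
  moreover have "of_nat (Suc e choose Suc i) * (c + 2 * of_nat (Suc i))
      - (of_nat (e choose i) * (c + of_nat (Suc i) + of_nat (Suc e)) + of_nat (e choose Suc i) * (c + of_nat (Suc i)))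
    = of_nat (e choose Suc i) * (of_nat i + 1) - of_nat (e choose i) * (of_nat e - of_nat i)"
    by (simp add: algebra_simps)
  ultimately show ?thesis by simp
qed

lemma binomial_pochhammer_partial_fractions:
  fixes c :: "'a :: field_char_0"
  assumes "k \<le> d" and nz: "\<And>i. 1 \<le> i \<Longrightarrow> i \<le> 2 * d - 1 \<Longrightarrow> c + of_nat i \<noteq> 0"
  shows "of_nat (d choose k) / (pochhammer (c + of_nat k) k * pochhammer (c + 2 * of_nat k + 1) (d - k))
    = (if k = 0 then 0 else of_nat ((d - 1) choose (k - 1)) / pochhammer (c + of_nat k) d)
      + of_nat ((d - 1) choose k) / pochhammer (c + of_nat (Suc k)) d"
proof -
  consider "k = 0" | "k = d" | i e where "k = Suc i" "d = Suc e" "i < e"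
  proof (cases "k = 0 \<or> k = d")
    case False
    then have "k - 1 < d - 1" using \<open>k \<le> d\<close> by linarith
    then show ?thesis using that(3)[of "k - 1" "d - 1"] False by simp
  qed (use that in blast)
  then show ?thesis
  proof cases
    case 1
    then show ?thesis by (simp add: add.commute)
  next
    case 2
    then show ?thesis by (simp add: binomial_eq_0)
  next
    case 3
    define Q where "Q = pochhammer (c + of_nat k) (Suc d)"
    define P where "P = pochhammer (c + of_nat k) k * pochhammer (c + 2 * of_nat k + 1) (d - k)"
    have "Q = pochhammer (c + of_nat k) k * pochhammer (c + of_nat k + of_nat k) (Suc (d - k))"
      unfolding Q_def using 3 pochhammer_product'[of "c + of_nat k" k "Suc (d - k)"] by simp
    then have QP: "Q = P * (c + 2 * of_nat k)"
      unfolding P_def pochhammer_rec by (simp add: algebra_simps)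
    have Q1: "Q = pochhammer (c + of_nat k) d * (c + of_nat k + of_nat d)"
      unfolding Q_def pochhammer_rec' by simp
    have Q2: "Q = (c + of_nat k) * pochhammer (c + of_nat (Suc k)) d"
      unfolding Q_def pochhammer_rec by (simp add: algebra_simps)
    have "Q \<noteq> 0"
      unfolding Q_def pochhammer_eq_0_iff
    proof
      assume "\<exists>j<Suc d. c + of_nat k = - of_nat j"
      then obtain j where "j < Suc d" "c + of_nat k = - of_nat j" by blast
      have "c + of_nat (k + j) = (c + of_nat k) + of_nat j" by (simp add: algebra_simps)
      also have "\<dots> = 0" using \<open>c + of_nat k = - of_nat j\<close> by simp
      finally show False using 3 nz[of "k + j"] \<open>j < Suc d\<close> by simp
    qed
    then have nz': "P \<noteq> 0" "c + 2 * of_nat k \<noteq> 0" "pochhammer (c + of_nat k) d \<noteq> 0"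
      "c + of_nat k + of_nat d \<noteq> 0" "c + of_nat k \<noteq> 0" "pochhammer (c + of_nat (Suc k)) d \<noteq> 0"
      using QP Q1 Q2 by auto
    have num: "of_nat (d choose k) * (c + 2 * of_nat k)
        = of_nat (e choose i) * (c + of_nat k + of_nat d) + of_nat (e choose Suc i) * (c + of_nat k)"
      unfolding 3 using 3 by (intro binomial_Suc_Suc_times_linear) simp
    have "of_nat (d choose k) / P = of_nat (d choose k) * (c + 2 * of_nat k) / Q"
      unfolding QP using nz' by simp
    also have "\<dots> = of_nat (e choose i) * (c + of_nat k + of_nat d) / Q
        + of_nat (e choose Suc i) * (c + of_nat k) / Q"
      unfolding num by (rule add_divide_distrib)
    also have "of_nat (e choose i) * (c + of_nat k + of_nat d) / Q
        = of_nat (e choose i) / pochhammer (c + of_nat k) d"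
      unfolding Q1 using nz' by simp
    also have "of_nat (e choose Suc i) * (c + of_nat k) / Q
        = of_nat (e choose Suc i) / pochhammer (c + of_nat (Suc k)) d"
      unfolding Q2 using nz' by (simp del: of_nat_Suc)
    finally show ?thesis using 3 by (simp add: P_def)
  qed
qed

lemma alternating_binomial_pochhammer_sum_eq_0:
  fixes c :: "'a :: field_char_0"
  assumes "d \<ge> 1" and nz: "\<And>i. 1 \<le> i \<Longrightarrow> i \<le> 2 * d - 1 \<Longrightarrow> c + of_nat i \<noteq> 0"
  shows "(\<Sum>k\<le>d. (-1) ^ (d - k) * of_nat (d choose k)
      / (pochhammer (c + of_nat k) k * pochhammer (c + 2 * of_nat k + 1) (d - k))) = 0"
proof -
  define H where "H k = (if k = 0 then 0 else of_nat ((d - 1) choose (k - 1)) / pochhammer (c + of_nat k) d)"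
    for k
  define G where "G k = (-1) ^ k * H k" for k
  have "(\<Sum>k\<le>d. (-1) ^ (d - k) * of_nat (d choose k)
      / (pochhammer (c + of_nat k) k * pochhammer (c + 2 * of_nat k + 1) (d - k)))
    = (\<Sum>k<Suc d. (-1) ^ d * (G k - G (Suc k)))"
    unfolding lessThan_Suc_atMost
  proof (rule sum.cong[OF refl])
    fix k
    assume "k \<in> {..d}"
    then have "k \<le> d" by simp
    then have sign: "(-1 :: 'a) ^ (d - k) = (-1) ^ d * (-1) ^ k"
      by (simp add: power_diff divide_inverse flip: power_inverse)
    show "(-1) ^ (d - k) * of_nat (d choose k)
        / (pochhammer (c + of_nat k) k * pochhammer (c + 2 * of_nat k + 1) (d - k))
      = (-1) ^ d * (G k - G (Suc k))"
    proof -
      have "of_nat (d choose k) / (pochhammer (c + of_nat k) k * pochhammer (c + 2 * of_nat k + 1) (d - k))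
          = H k + H (Suc k)"
        unfolding H_def using binomial_pochhammer_partial_fractions[OF \<open>k \<le> d\<close> nz] by simp
      then show ?thesis
        by (simp only: times_divide_eq_right[symmetric] sign G_def) (simp add: algebra_simps)
    qed
  qed
  also have "\<dots> = (-1) ^ d * (G 0 - G (Suc d))"
    by (simp only: sum_distrib_left[symmetric] sum_lessThan_telescope')
  also have "\<dots> = 0"
    using \<open>d \<ge> 1\<close> by (simp add: G_def H_def binomial_eq_0)
  finally show ?thesis .
qed

definition binom_poch_prod :: "(nat \<Rightarrow> 'a :: comm_semiring_1) \<Rightarrow> nat list \<Rightarrow> nat list \<Rightarrow> 'a" where
  "binom_poch_prod A m n = (\<Prod>p<length m. of_nat (m ! p choose n ! p)
     * pochhammer (A p + of_nat (sum_list (take p m) + sum_list (take (Suc p) n))) (m ! p - n ! p))"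

lemma binom_poch_prod_snoc:
  assumes "length ns = length ms"
  shows "binom_poch_prod A (ms @ [ml]) (ns @ [nl]) = binom_poch_prod A ms ns
    * (of_nat (ml choose nl) * pochhammer (A (length ms) + of_nat (sum_list ms + (sum_list ns + nl))) (ml - nl))"
  unfolding binom_poch_prod_def using assms
  by (auto simp: nth_append intro!: prod.cong)

lemma tbox_snoc:
  assumes "length ns = length ms"
  shows "tbox (ns @ [nl]) (ms @ [ml]) = (\<lambda>(xs, xl). xs @ [xl]) ` (tbox ns ms \<times> {nl..ml})"
proof (intro set_eqI iffI)
  fix x
  assume x: "x \<in> tbox (ns @ [nl]) (ms @ [ml])"
  then obtain xs xl where "x = xs @ [xl]"
    by (cases x rule: rev_cases) (auto simp: tbox_def)
  then show "x \<in> (\<lambda>(xs, xl). xs @ [xl]) ` (tbox ns ms \<times> {nl..ml})"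
    using x assms by (force simp: tbox_def nth_append less_Suc_eq)
next
  fix x
  assume "x \<in> (\<lambda>(xs, xl). xs @ [xl]) ` (tbox ns ms \<times> {nl..ml})"
  then show "x \<in> tbox (ns @ [nl]) (ms @ [ml])"
    using assms by (auto simp: tbox_def nth_append less_Suc_eq)
qed

lemma finite_tbox: "finite (tbox n m)"
proof (rule finite_subset)
  show "tbox n m \<subseteq> {xs. set xs \<subseteq> {..\<Sum>p<length n. m ! p} \<and> length xs = length n}"
    by (force simp: tbox_def in_set_conv_nth intro: order_trans[OF _ member_le_sum])
  show "finite {xs. set xs \<subseteq> {..\<Sum>p<length n. m ! p} \<and> length xs = length n}"
    by (rule finite_lists_length_eq) simp
qed

lemma sum_tbox_snoc:
  assumes "length ns = length ms"
  shows "(\<Sum>x\<in>tbox (ns @ [nl]) (ms @ [ml]). f x) = (\<Sum>xl=nl..ml. \<Sum>xs\<in>tbox ns ms. f (xs @ [xl]))"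
proof -
  have "inj_on (\<lambda>(xs, xl). xs @ [xl]) (tbox ns ms \<times> {nl..ml})"
    by (rule inj_onI) auto
  then have "(\<Sum>x\<in>tbox (ns @ [nl]) (ms @ [ml]). f x) = (\<Sum>(xs, xl)\<in>tbox ns ms \<times> {nl..ml}. f (xs @ [xl]))"
    unfolding tbox_snoc[OF assms] by (simp add: sum.reindex case_prod_unfold)
  also have "\<dots> = (\<Sum>xl=nl..ml. \<Sum>xs\<in>tbox ns ms. f (xs @ [xl]))"
    by (simp add: sum.cartesian_product[symmetric] sum.swap[of _ "tbox ns ms"])
  finally show ?thesis .
qed

lemma sum_list_mono_nth:
  assumes "length xs = length ys" "\<And>p. p < length xs \<Longrightarrow> xs ! p \<le> ys ! p"
  shows "sum_list xs \<le> (sum_list ys :: nat)"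
proof -
  have "(\<Sum>p<length xs. xs ! p) \<le> (\<Sum>p<length xs. ys ! p)"
    using assms(2) by (intro sum_mono) auto
  then show ?thesis
    using assms(1) by (simp add: sum_list_sum_nth atLeast0LessThan)
qed

lemma sum_list_less_nth:
  assumes "length xs = length ys" "\<And>p. p < length xs \<Longrightarrow> xs ! p \<le> ys ! p" "xs \<noteq> ys"
  shows "sum_list xs < (sum_list ys :: nat)"
proof -
  obtain q where q: "q < length xs" "xs ! q \<noteq> ys ! q"
    using assms(1,3) nth_equalityI by blast
  then have "xs ! q < ys ! q"
    using assms(2) by (simp add: le_neq_implies_less)
  then have "(\<Sum>p<length xs. xs ! p) < (\<Sum>p<length xs. ys ! p)"
    using assms(2) q by (intro sum_strict_mono_ex1) auto
  then show ?thesis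
    using assms(1) by (simp add: sum_list_sum_nth atLeast0LessThan)
qed

lemma sum_list_tbox:
  assumes "x \<in> tbox n m" "length m = length n"
  shows "sum_list n \<le> sum_list x" "sum_list x \<le> sum_list m"
  using assms by (auto simp: tbox_def intro!: sum_list_mono_nth)

lemma sum_tbox_snoc_level:
  assumes "length ns = length ms"
  shows "(\<Sum>x\<in>{x\<in>tbox (ns @ [nl]) (ms @ [ml]). sum_list x = s}. f x)
    = (\<Sum>xl=nl..ml. \<Sum>xs\<in>{xs\<in>tbox ns ms. sum_list xs + xl = s}. f (xs @ [xl]))"
  using sum_tbox_snoc[OF assms, of "\<lambda>x. if sum_list x = s then f x else 0"]
  by (simp add: sum.inter_filter[OF finite_tbox])

lemma binom_poch_snoc_factor_reindex:
  fixes a :: "'a :: comm_ring_1"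
  assumes "j \<le> t" "j + nl \<le> ml" "N \<le> M"
  shows "of_nat ((j + nl) choose nl) * pochhammer (a + of_nat (N + (t - j) + (N + nl))) (j + nl - nl)
      * (of_nat (ml choose (j + nl)) * pochhammer (a + of_nat (M + (N + (t - j) + (j + nl)))) (ml - (j + nl)))
    = of_nat (ml choose nl) * (of_nat ((ml - nl) choose j) * pochhammer (a + of_nat (N + N + nl) + of_nat (t - j)) j
      * pochhammer (a + of_nat (N + N + nl) + of_nat (M - N) + of_nat t) (ml - nl - j))"
proof -
  have "(ml choose (j + nl)) * ((j + nl) choose nl) = (ml choose nl) * ((ml - nl) choose j)"
    using choose_mult[of nl "j + nl" ml] assms by simp
  then have binom: "of_nat (ml choose (j + nl)) * of_nat ((j + nl) choose nl)
      = (of_nat (ml choose nl) * of_nat ((ml - nl) choose j) :: 'a)"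
    by (simp flip: of_nat_mult)
  have args: "a + of_nat (N + (t - j) + (N + nl)) = a + of_nat (N + N + nl) + of_nat (t - j)"
    "a + of_nat (M + (N + (t - j) + (j + nl))) = a + of_nat (N + N + nl) + of_nat (M - N) + of_nat t"
    "ml - (j + nl) = ml - nl - j"
    using assms by (simp_all add: algebra_simps)
  show ?thesis
    unfolding args add_diff_cancel_right' mult.assoc[symmetric] binom[symmetric] by (simp only: ac_simps)
qed

lemma sum_binom_poch_prod_level_snoc:
  fixes A :: "nat \<Rightarrow> 'a :: comm_ring_1"
  defines "K \<equiv> binom_poch_prod A"
  assumes len: "length ns = length ms" and "nl \<le> ml" and NM: "sum_list ns \<le> sum_list ms"
    and IH: "\<And>t. (\<Sum>x\<in>{x\<in>tbox ns ms. sum_list x = sum_list ns + t}. K x ns * K ms x)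
      = K ms ns * of_nat ((sum_list ms - sum_list ns) choose t)"
  shows "(\<Sum>x\<in>{x\<in>tbox (ns @ [nl]) (ms @ [ml]). sum_list x = sum_list (ns @ [nl]) + t}.
      K x (ns @ [nl]) * K (ms @ [ml]) x)
    = K (ms @ [ml]) (ns @ [nl]) * of_nat ((sum_list (ms @ [ml]) - sum_list (ns @ [nl])) choose t)"
proof -
  define N where "N = sum_list ns"
  define M where "M = sum_list ms"
  define L where "L = length ms"
  define e where "e = ml - nl"
  define z where "z = A L + of_nat (N + N + nl)"
  define w where "w xl \<sigma> = of_nat (xl choose nl) * pochhammer (A L + of_nat (\<sigma> + (N + nl))) (xl - nl)
      * (of_nat (ml choose xl) * pochhammer (A L + of_nat (M + (\<sigma> + xl))) (ml - xl))" for xl \<sigma>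
  have factor: "K (xs @ [xl]) (ns @ [nl]) * K (ms @ [ml]) (xs @ [xl]) = K xs ns * K ms xs * w xl (sum_list xs)"
    if "xs \<in> tbox ns ms" for xs xl
    using that len unfolding K_def w_def N_def M_def L_def
    by (simp add: binom_poch_prod_snoc tbox_def algebra_simps)
  have level: "{xs\<in>tbox ns ms. sum_list xs + (j + nl) = N + nl + t}
      = (if j \<le> t then {xs\<in>tbox ns ms. sum_list xs = N + (t - j)} else {})" for j
  proof -
    have N_le: "N \<le> sum_list xs" if "xs \<in> tbox ns ms" for xs
      using sum_list_tbox(1)[OF that] len unfolding N_def by simp
    show ?thesis by (auto dest: N_le)
  qed
  have "(\<Sum>x\<in>{x\<in>tbox (ns @ [nl]) (ms @ [ml]). sum_list x = N + nl + t}. K x (ns @ [nl]) * K (ms @ [ml]) x)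
      = (\<Sum>xl\<in>{0 + nl..e + nl}. \<Sum>xs\<in>{xs\<in>tbox ns ms. sum_list xs + xl = N + nl + t}.
          K xs ns * K ms xs * w xl (sum_list xs))"
    unfolding sum_tbox_snoc_level[OF len] e_def using factor \<open>nl \<le> ml\<close> by (intro sum.cong) auto
  also have "\<dots> = (\<Sum>j\<le>e. if j \<le> t then K ms ns * of_nat ((M - N) choose (t - j)) * w (j + nl) (N + (t - j)) else 0)"
    unfolding sum.shift_bounds_cl_nat_ivl atLeast0AtMost level
    by (intro sum.cong refl) (simp add: sum_distrib_right[symmetric] IH[folded N_def M_def] del: add_diff_assoc)
  also have "\<dots> = K ms ns * of_nat (ml choose nl) * (\<Sum>j\<le>e. (if j \<le> t then of_nat ((M - N) choose (t - j)) else 0)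
      * of_nat (e choose j) * pochhammer (z + of_nat (t - j)) j * pochhammer (z + of_nat (M - N) + of_nat t) (e - j))"
    unfolding sum_distrib_left w_def z_def e_def
    using binom_poch_snoc_factor_reindex[of _ t nl ml N M "A L"] \<open>nl \<le> ml\<close> NM
    by (intro sum.cong refl) (auto simp: N_def M_def ac_simps)
  also have "\<dots> = K ms ns * of_nat (ml choose nl) * (of_nat ((M - N + e) choose t) * pochhammer (z + of_nat (M - N)) e)"
    by (simp only: pochhammer_binomial_convolution)
  also have "\<dots> = K (ms @ [ml]) (ns @ [nl]) * of_nat ((sum_list (ms @ [ml]) - sum_list (ns @ [nl])) choose t)"
    using NM \<open>nl \<le> ml\<close> unfolding K_def binom_poch_prod_snoc[OF len] z_def e_def N_def M_def L_def
    by (simp add: algebra_simps)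
  finally show ?thesis unfolding N_def by simp
qed

lemma sum_binom_poch_prod_level:
  fixes A :: "nat \<Rightarrow> 'a :: comm_ring_1"
  assumes "length n = length m" "\<And>p. p < length m \<Longrightarrow> n ! p \<le> m ! p"
  shows "(\<Sum>x\<in>{x\<in>tbox n m. sum_list x = sum_list n + t}. binom_poch_prod A x n * binom_poch_prod A m x)
    = binom_poch_prod A m n * of_nat ((sum_list m - sum_list n) choose t)"
  using assms
proof (induction m arbitrary: n t rule: rev_induct)
  case Nil
  then have "{x\<in>tbox n []. sum_list x = sum_list n + t} = (if t = 0 then {[]} else {})"
    by (auto simp: tbox_def)
  with Nil show ?case by (simp add: binom_poch_prod_def binomial_eq_0)
next
  case (snoc ml ms)
  obtain ns nl where n: "n = ns @ [nl]"
    using snoc.prems(1) by (cases n rule: rev_cases) auto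
  have len: "length ns = length ms" using snoc.prems(1) n by simp
  have le: "ns ! p \<le> ms ! p" if "p < length ms" for p
    using snoc.prems(2)[of p] that len n by (simp add: nth_append)
  have "nl \<le> ml" using snoc.prems(2)[of "length ms"] len n by (simp add: nth_append)
  moreover have "sum_list ns \<le> sum_list ms" using le len by (intro sum_list_mono_nth) auto
  ultimately show ?case
    unfolding n using sum_binom_poch_prod_level_snoc[OF len] snoc.IH[OF len le] by blast
qed

lemma sum_tbox_weighted_binom_poch_prod:
  fixes A :: "nat \<Rightarrow> 'a :: comm_ring_1"
  assumes "length n = length m" "\<And>p. p < length m \<Longrightarrow> n ! p \<le> m ! p"
  shows "(\<Sum>x\<in>tbox n m. f (sum_list x) * (binom_poch_prod A x n * binom_poch_prod A m x))
    = binom_poch_prod A m n * (\<Sum>t\<le>sum_list m - sum_list n.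
        of_nat ((sum_list m - sum_list n) choose t) * f (sum_list n + t))"
proof -
  define N where "N = sum_list n"
  define d where "d = sum_list m - N"
  have range: "sum_list ` tbox n m \<subseteq> {0 + N..d + N}"
    using sum_list_tbox assms(1) unfolding N_def d_def by fastforce
  have "(\<Sum>x\<in>tbox n m. f (sum_list x) * (binom_poch_prod A x n * binom_poch_prod A m x))
      = (\<Sum>s\<in>{0 + N..d + N}. \<Sum>x\<in>{x\<in>tbox n m. sum_list x = s}.
          f (sum_list x) * (binom_poch_prod A x n * binom_poch_prod A m x))"
    by (rule sum.group[OF finite_tbox _ range, symmetric]) simp
  also have "\<dots> = (\<Sum>s\<in>{0 + N..d + N}. f s * (\<Sum>x\<in>{x\<in>tbox n m. sum_list x = s}.
          binom_poch_prod A x n * binom_poch_prod A m x))"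
    by (intro sum.cong refl) (simp add: sum_distrib_left)
  also have "\<dots> = (\<Sum>t\<le>d. f (N + t) * (binom_poch_prod A m n * of_nat (d choose t)))"
    unfolding sum.shift_bounds_cl_nat_ivl atLeast0AtMost
    using sum_binom_poch_prod_level[OF assms, of A] unfolding N_def d_def
    by (simp add: sum_distrib_left[symmetric] add.commute)
  finally show ?thesis
    unfolding N_def d_def by (simp add: sum_distrib_left ac_simps)
qed

lemma psum_1_eq_sum_list_take: "k \<le> length v \<Longrightarrow> psum v 1 k = sum_list (take k v)"
  unfolding psum_def sum_list_sum_nth
  by (simp add: sum.atLeast1_atMost_eq[simplified] atLeast0LessThan min_def)

lemma tsum_eq_sum_list: "tsum v = sum_list v"
  unfolding tsum_def using psum_1_eq_sum_list_take[of "length v" v] by simp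

lemma prod_atLeast1_atMost: "(\<Prod>p\<in>{1..k}. f p) = (\<Prod>q<k. f (Suc q))"
  using prod.atLeast1_atMost_eq[of f k] by simp

(* p is 0-based here: in the paper's indexing this is |ell|_(p+1)^N + a_(p+1) + omega + 1. *)
definition poch_base :: "nat list \<Rightarrow> complex list \<Rightarrow> complex \<Rightarrow> nat \<Rightarrow> complex" where
  "poch_base ell a \<omega> p = of_nat (psum ell (Suc p) (length ell)) + a ! p + \<omega> + 1"

lemma prod_psum_eq_binom_poch_prod:
  assumes "length u = length ell" "length v = length ell"
  shows "(\<Prod>p\<in>{1..length ell}. of_nat ((u ! (p - 1)) choose (v ! (p - 1)))
      * pochhammer (of_nat (psum u 1 (p - 1) + psum v 1 p + psum ell p (length ell)) + a ! (p - 1) + \<omega> + 1)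
          (u ! (p - 1) - v ! (p - 1)))
    = binom_poch_prod (poch_base ell a \<omega>) u v"
  unfolding prod_atLeast1_atMost binom_poch_prod_def assms(1)
proof (intro prod.cong refl)
  fix q
  assume "q \<in> {..<length ell}"
  then have "psum u 1 q = sum_list (take q u)" "psum v 1 (Suc q) = sum_list (take (Suc q) v)"
    using assms by (intro psum_1_eq_sum_list_take; simp)+
  then show "of_nat ((u ! (Suc q - 1)) choose (v ! (Suc q - 1)))
      * pochhammer (of_nat (psum u 1 (Suc q - 1) + psum v 1 (Suc q) + psum ell (Suc q) (length ell))
        + a ! (Suc q - 1) + \<omega> + 1) (u ! (Suc q - 1) - v ! (Suc q - 1))
    = of_nat (u ! q choose v ! q) * pochhammer (poch_base ell a \<omega> q
        + of_nat (sum_list (take q u) + sum_list (take (Suc q) v))) (u ! q - v ! q)"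
    unfolding diff_Suc_1 poch_base_def by (simp add: algebra_simps)
qed

lemma coefC_eq:
  assumes "length m = length ell" "length x = length ell"
  shows "coefC ell a \<omega> m x = (-1) ^ (sum_list m - sum_list x)
    / pochhammer (2 * of_nat (sum_list x) + \<omega> + 1) (sum_list m - sum_list x)
    * binom_poch_prod (poch_base ell a \<omega>) m x"
  unfolding coefC_def tsum_eq_sum_list prod_psum_eq_binom_poch_prod[OF assms] ..

lemma coefCbar_eq:
  assumes "length x = length ell" "length n = length ell"
  shows "coefCbar ell a \<omega> x n = binom_poch_prod (poch_base ell a \<omega>) x n
    / pochhammer (of_nat (sum_list n + sum_list x) + \<omega>) (sum_list x - sum_list n)"
  unfolding coefCbar_def tsum_eq_sum_list prod_psum_eq_binom_poch_prod[OF assms, symmetric]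
  by (simp add: ac_simps)

lemma sum_coefCbar_coefC:
  assumes len: "length n = length ell" "length m = length ell"
    and le: "\<And>p. p < length ell \<Longrightarrow> n ! p \<le> m ! p" "\<And>p. p < length ell \<Longrightarrow> m ! p \<le> ell ! p"
    and om: "\<And>k::int. - 2 * int (tsum ell) + 1 \<le> k \<Longrightarrow> k \<le> -1 \<Longrightarrow> \<omega> \<noteq> of_int k"
  shows "(\<Sum>x\<in>tbox n m. coefCbar ell a \<omega> x n * coefC ell a \<omega> m x) = (if m = n then 1 else 0)"
proof -
  define K where "K = binom_poch_prod (poch_base ell a \<omega>)"
  define N where "N = sum_list n"
  define d where "d = sum_list m - N"
  define c where "c = 2 * of_nat N + \<omega>"
  have NM: "N \<le> sum_list m"
    unfolding N_def using len le by (intro sum_list_mono_nth) auto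
  have "coefCbar ell a \<omega> x n * coefC ell a \<omega> m x
      = (-1) ^ (d - (sum_list x - N)) / (pochhammer (c + of_nat (sum_list x - N)) (sum_list x - N)
          * pochhammer (c + 2 * of_nat (sum_list x - N) + 1) (d - (sum_list x - N))) * (K x n * K m x)"
    if "x \<in> tbox n m" for x
  proof -
    have "length x = length ell" "N \<le> sum_list x" "sum_list x \<le> sum_list m"
      using that len sum_list_tbox[OF that] unfolding N_def by (auto simp: tbox_def)
    then show ?thesis
      unfolding coefCbar_eq[OF \<open>length x = length ell\<close> len(1)] coefC_eq[OF len(2) \<open>length x = length ell\<close>]
      unfolding K_def c_def d_def N_def by (simp add: algebra_simps)
  qed
  then have "(\<Sum>x\<in>tbox n m. coefCbar ell a \<omega> x n * coefC ell a \<omega> m x)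
      = K m n * (\<Sum>t\<le>d. (-1) ^ (d - t) * of_nat (d choose t)
          / (pochhammer (c + of_nat t) t * pochhammer (c + 2 * of_nat t + 1) (d - t)))"
    using sum_tbox_weighted_binom_poch_prod[of n m "\<lambda>s. (-1) ^ (d - (s - N))
        / (pochhammer (c + of_nat (s - N)) (s - N) * pochhammer (c + 2 * of_nat (s - N) + 1) (d - (s - N)))"]
      len le unfolding K_def N_def d_def by (simp add: ac_simps)
  also have "\<dots> = (if m = n then 1 else 0)"
  proof (cases "m = n")
    case True
    then show ?thesis unfolding d_def N_def K_def by (simp add: binom_poch_prod_def)
  next
    case False
    then have "N < sum_list m"
      unfolding N_def using len le by (intro sum_list_less_nth) auto
    moreover have "c + of_nat i \<noteq> 0" if "1 \<le> i" "i \<le> 2 * d - 1" for i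
    proof -
      have "sum_list m \<le> tsum ell"
        unfolding tsum_eq_sum_list using len le by (intro sum_list_mono_nth) auto
      then have "\<omega> \<noteq> of_int (- int (2 * N + i))"
        using that NM unfolding d_def by (intro om) auto
      then show ?thesis
        unfolding c_def by (auto simp: algebra_simps add_eq_0_iff2)
    qed
    ultimately show ?thesis
      using False alternating_binomial_pochhammer_sum_eq_0[of d c] unfolding d_def by simp
  qed
  finally show ?thesis .
qed

lemma sum_fun_apply: "finite S \<Longrightarrow> (\<Sum>x\<in>S. f x) y = (\<Sum>x\<in>S. f x y)"
  by (induction S rule: finite_induct) auto

lemma Vvec_apply: "Vvec ell a \<omega> x m = (if m \<in> tbox x ell then coefC ell a \<omega> m x else 0)"
  unfolding Vvec_def sum_fun_apply[OF finite_tbox] basisV_def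
  by (simp add: finite_tbox if_distrib[of "\<lambda>v. _ * v"] cong: if_cong)

lemma tbox_trans_iff: "x \<in> tbox n ell \<and> m \<in> tbox x ell \<longleftrightarrow> m \<in> tbox n ell \<and> x \<in> tbox n m"
  unfolding tbox_def by (auto intro: order_trans)

theorem mainTheorem3:
  fixes N :: nat and ell :: "nat list" and a :: "complex list"
    and \<theta>0 \<theta>0s h hs \<omega> \<omega>s :: complex and n :: "nat list"
  assumes N: "N \<ge> 1" and len_ell: "length ell = N" and len_a: "length a = N"
    and h: "h \<noteq> 0" and hs: "hs \<noteq> 0"
    and om: "\<And>k::int. - 2 * int (tsum ell) + 1 \<le> k \<Longrightarrow> k \<le> -1 \<Longrightarrow> \<omega> \<noteq> of_int k"
    and oms: "\<And>k::int. - 2 * int (tsum ell) + 1 \<le> k \<Longrightarrow> k \<le> -1 \<Longrightarrow> \<omega>s \<noteq> of_int k"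
    and ai: "\<And>i k::int. i < N \<Longrightarrow> - int (ell ! i) \<le> k \<Longrightarrow> k \<le> -1 \<Longrightarrow>
              a ! i \<noteq> of_int k \<and> a ! i + \<omega> - \<omega>s \<noteq> of_int k
              \<and> a ! i - of_nat (tsum ell) - \<omega>s \<noteq> of_int k
              \<and> a ! i + of_nat (tsum ell) + \<omega> \<noteq> of_int k"
    and gp: "\<And>i j \<epsilon>i \<epsilon>j. i < N \<Longrightarrow> j < N \<Longrightarrow>
              general_position (Spm \<epsilon>i (ell ! i) (a ! i) \<omega> \<omega>s) (Spm \<epsilon>j (ell ! j) (a ! j) \<omega> \<omega>s)"
    and n: "n \<in> tbox (replicate N 0) ell"
  shows "basisV n = (\<Sum>x\<in>tbox n ell. (\<lambda>m. coefCbar ell a \<omega> x n * Vvec ell a \<omega> x m))"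
proof
  fix m
  have len_n: "length n = length ell" and "n \<in> tbox n ell"
    using n len_ell by (auto simp: tbox_def)
  have "(\<Sum>x\<in>tbox n ell. (\<lambda>m. coefCbar ell a \<omega> x n * Vvec ell a \<omega> x m)) m
      = (\<Sum>x\<in>{x\<in>tbox n ell. m \<in> tbox x ell}. coefCbar ell a \<omega> x n * coefC ell a \<omega> m x)"
    unfolding sum_fun_apply[OF finite_tbox] Vvec_apply
    by (simp add: sum.inter_filter[OF finite_tbox] if_distrib[of "\<lambda>v. _ * v"] cong: if_cong)
  also have "{x\<in>tbox n ell. m \<in> tbox x ell} = (if m \<in> tbox n ell then tbox n m else {})"
    using tbox_trans_iff by auto
  also have "(\<Sum>x\<in>(if m \<in> tbox n ell then tbox n m else {}). coefCbar ell a \<omega> x n * coefC ell a \<omega> m x)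
      = basisV n m"
    using sum_coefCbar_coefC[OF len_n _ _ _ om] \<open>n \<in> tbox n ell\<close> len_n
    by (auto simp: basisV_def tbox_def)
  finally show "basisV n m = (\<Sum>x\<in>tbox n ell. (\<lambda>m. coefCbar ell a \<omega> x n * Vvec ell a \<omega> x m)) m"
    by (rule sym)
qed

end
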